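(* For every integer $n>3$ there exists a latin square of order $n$ containing a cell that is not contained in any transversal of the square.
   Context: A latin square of order $n$ is an $n\times n$ array of $n$ symbols in which each symbol occurs exactly once in each row and column. A transversal is a set of $n$ cells, one from each row and one from each column, no two containing the same symbol. *)

theory Defs
  imports Main
begin

definition latin_square :: "nat \<Rightarrow> (nat \<Rightarrow> nat \<Rightarrow> nat) \<Rightarrow> bool" where
  "latin_square n L \<longleftrightarrow>
     (\<forall>i<n. \<forall>j<n. L i j < n) \<and>
     (\<forall>i<n. \<forall>s<n. \<exists>!j. j < n \<and> L i j = s) \<and>
     (\<forall>j<n. \<forall>s<n. \<exists>!i. i < n \<and> L i j = s)"

definition transversal :: "nat \<Rightarrow> (nat \<Rightarrow> nat \<Rightarrow> nat) \<Rightarrow> (nat \<times> nat) set \<Rightarrow> bool" where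
  "transversal n L T \<longleftrightarrow>
     T \<subseteq> {0..<n} \<times> {0..<n} \<and> card T = n \<and>
     (\<forall>i<n. \<exists>!j. (i, j) \<in> T) \<and>
     (\<forall>j<n. \<exists>!i. (i, j) \<in> T) \<and>
     inj_on (\<lambda>(i, j). L i j) T"

end

theory Submission
  imports Defs "HOL-Number_Theory.Cong"
begin

(* The tool is a congruence for sums.  A transversal is the graph of a permutation f
   of {0..<n} along which the symbols L i (f i) again form a permutation, so
   Sum f i = Sum L i (f i) = Sum i.  Writing every entry as L i j = (s i j + j) mod n
   with a "shift" s i j, comparing these sums modulo n shows that the shifts along a
   transversal add up to 0 modulo n (shift_sum_along_transversal).

   - n even: the cyclic square (i + j) mod n has shifts s i j = i, which add up to
     n(n-1)/2, not divisible by n; so it has no transversal at all.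
   - n odd, n >= 5: permute the shifts 0, 1, 2 of rows 0, 1, 2 within every column of
     the cyclic square (odd_square).  For a transversal through (0,0) the congruence
     forces it to use cell (2, n-1), whose symbol 0 repeats the symbol of (0,0). *)

lemma double_sum_lessThan: "2 * (\<Sum>i<n. i) = n * (n - 1 :: nat)"
proof (induction n)
  case 0
  show ?case by simp
next
  case (Suc n)
  have "2 * (\<Sum>i<Suc n. i) = n * (n - 1) + 2 * n" using Suc by simp
  also have "\<dots> = Suc n * (Suc n - 1)" by (cases n) auto
  finally show ?case .
qed

text \<open>The sum 0 + 1 + ... + (n-1) is divisible by n exactly when n is odd; this is the
  parity obstruction behind both constructions.\<close>
lemma dvd_sum_lessThan_iff:
  fixes n :: nat
  assumes "n > 0"
  shows "n dvd (\<Sum>i<n. i) \<longleftrightarrow> odd n"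
proof
  assume "n dvd (\<Sum>i<n. i)"
  then obtain q where q: "(\<Sum>i<n. i) = n * q" by (elim dvdE)
  have "n * (2 * q) = n * (n - 1)" by (metis double_sum_lessThan mult.left_commute q)
  then have "2 * q = n - 1" using assms by auto
  then show "odd n" using assms by presburger
next
  assume "odd n"
  then have "even (n - 1)" using assms by simp
  then obtain q where "n - 1 = 2 * q" by (elim evenE)
  then have "2 * (\<Sum>i<n. i) = 2 * (n * q)" using double_sum_lessThan[of n] by simp
  then show "n dvd (\<Sum>i<n. i)" by simp
qed

lemma add_mod_right_cancel:
  fixes a b c n :: nat
  assumes "a < n" "b < n" "(a + c) mod n = (b + c) mod n"
  shows "a = b"
  using assms cong_add_rcancel_nat[of a c b n] cong_less_modulus_unique_nat
  unfolding cong_def by blast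

lemma mod_less_double:
  fixes x n :: nat
  assumes "x < 2 * n"
  shows "x mod n = (if x < n then x else x - n)"
  using assms by (auto simp: mod_if le_mod_geq)

lemma sum_lessThan_split3:
  fixes g :: "nat \<Rightarrow> 'a :: comm_monoid_add"
  assumes "3 \<le> n"
  shows "(\<Sum>i<n. g i) = g 0 + g 1 + g 2 + (\<Sum>i = 3..<n. g i)"
proof -
  have "{..<n} = {..<3} \<union> {3..<n}" using assms by auto
  moreover have "sum g ({..<3} \<union> {3..<n}) = (\<Sum>i<3. g i) + (\<Sum>i = 3..<n. g i)"
    by (rule sum.union_disjoint) auto
  ultimately have "(\<Sum>i<n. g i) = (\<Sum>i<3. g i) + (\<Sum>i = 3..<n. g i)" by simp
  then show ?thesis by (simp add: numeral_3_eq_3 numeral_2_eq_2 add.assoc)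
qed

lemma image_perm_lessThan:
  fixes g :: "nat \<Rightarrow> nat"
  assumes "inj_on g {..<n}" "\<forall>i<n. g i < n"
  shows "g ` {..<n} = {..<n}"
  using assms by (intro endo_inj_surj) auto

lemma sum_perm_lessThan:
  fixes g :: "nat \<Rightarrow> nat" and h :: "nat \<Rightarrow> 'a :: comm_monoid_add"
  assumes "inj_on g {..<n}" "\<forall>i<n. g i < n"
  shows "(\<Sum>i<n. h (g i)) = (\<Sum>i<n. h i)"
  using sum.reindex[OF assms(1), of h] image_perm_lessThan[OF assms] by simp

lemma ex1_preimage_perm_lessThan:
  fixes g :: "nat \<Rightarrow> nat"
  assumes inj: "inj_on g {..<n}" and range: "\<forall>i<n. g i < n" and "s < n"
  shows "\<exists>!x. x < n \<and> g x = s"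
proof -
  obtain x where "x < n" "g x = s"
    using image_perm_lessThan[OF inj range] \<open>s < n\<close> by (metis imageE lessThan_iff)
  then show ?thesis using inj by (intro ex1I[of _ x]) (auto simp: inj_on_def)
qed

lemma latin_squareI:
  assumes range: "\<forall>i<n. \<forall>j<n. L i j < n"
    and rows: "\<forall>i<n. inj_on (L i) {..<n}"
    and cols: "\<forall>j<n. inj_on (\<lambda>i. L i j) {..<n}"
  shows "latin_square n L"
  unfolding latin_square_def
proof (intro conjI allI impI)
  fix i j assume "i < n" "j < n"
  then show "L i j < n" using range by blast
next
  fix i s assume "i < n" "s < n"
  then show "\<exists>!j. j < n \<and> L i j = s"
    by (intro ex1_preimage_perm_lessThan) (use rows range in auto)
next
  fix j s assume "j < n" "s < n"
  then show "\<exists>!i. i < n \<and> L i j = s"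
    by (intro ex1_preimage_perm_lessThan) (use cols range in auto)
qed

lemma transversal_graph:
  assumes lat: "latin_square n L" and tr: "transversal n L T"
  obtains f where "\<forall>i<n. \<forall>j. (i, j) \<in> T \<longleftrightarrow> j = f i"
    and "inj_on f {..<n}" "\<forall>i<n. f i < n"
    and "inj_on (\<lambda>i. L i (f i)) {..<n}" "\<forall>i<n. L i (f i) < n"
proof -
  have sub: "T \<subseteq> {0..<n} \<times> {0..<n}" and rows: "\<forall>i<n. \<exists>!j. (i, j) \<in> T"
    and cols: "\<forall>j<n. \<exists>!i. (i, j) \<in> T" and symbols: "inj_on (\<lambda>(i, j). L i j) T"
    using tr unfolding transversal_def by auto
  define f where "f i = (THE j. (i, j) \<in> T)" for i
  have f_in: "(i, f i) \<in> T" if "i < n" for i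
    unfolding f_def using theI'[OF rows[rule_format, OF that]] .
  have graph: "\<forall>i<n. \<forall>j. (i, j) \<in> T \<longleftrightarrow> j = f i"
  proof (intro allI impI)
    fix i j assume "i < n"
    then show "(i, j) \<in> T \<longleftrightarrow> j = f i"
      using f_in[of i] rows[rule_format, of i] by auto
  qed
  have f_range: "\<forall>i<n. f i < n" using f_in sub by fastforce
  have f_inj: "inj_on f {..<n}"
  proof (rule inj_onI)
    fix x y assume "x \<in> {..<n}" "y \<in> {..<n}" "f x = f y"
    then have "(x, f x) \<in> T" "(y, f x) \<in> T" "f x < n"
      using f_in[of x] f_in[of y] f_range by auto
    then show "x = y" using cols[rule_format, of "f x"] by auto
  qed
  have symbols_inj: "inj_on (\<lambda>i. L i (f i)) {..<n}"
  proof (rule inj_onI)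
    fix x y assume "x \<in> {..<n}" "y \<in> {..<n}" "L x (f x) = L y (f y)"
    then have "(x, f x) = (y, f y)"
      using inj_onD[OF symbols, of "(x, f x)" "(y, f y)"] f_in[of x] f_in[of y] by simp
    then show "x = y" by simp
  qed
  have symbols_range: "\<forall>i<n. L i (f i) < n"
    using lat f_range unfolding latin_square_def by simp
  show thesis by (rule that[OF graph f_inj f_range symbols_inj symbols_range])
qed

text \<open>The key congruence: if the entries along the transversal f are obtained from the
  column index by a shift, L i (f i) = (s i (f i) + f i) mod n, then the shifts add up to
  0 modulo n, because both the columns and the symbols run through all of {0..<n}.\<close>
lemma shift_sum_along_transversal:
  fixes s :: "nat \<Rightarrow> nat \<Rightarrow> nat"
  assumes f_perm: "inj_on f {..<n}" "\<forall>i<n. f i < n"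
    and symbol_perm: "inj_on (\<lambda>i. L i (f i)) {..<n}" "\<forall>i<n. L i (f i) < n"
    and shift: "\<forall>i<n. L i (f i) = (s i (f i) + f i) mod n"
  shows "[(\<Sum>i<n. s i (f i)) = 0] (mod n)"
proof -
  have "(\<Sum>i<n. i) = (\<Sum>i<n. L i (f i))"
    using sum_perm_lessThan[OF symbol_perm, of "\<lambda>x. x"] by simp
  also have "[\<dots> = (\<Sum>i<n. s i (f i) + f i)] (mod n)"
    by (rule cong_sum) (simp add: shift)
  also have "(\<Sum>i<n. s i (f i) + f i) = (\<Sum>i<n. s i (f i)) + (\<Sum>i<n. i)"
    using sum_perm_lessThan[OF f_perm, of "\<lambda>x. x"] by (simp add: sum.distrib)
  finally show ?thesis
    using cong_add_rcancel_0_nat cong_sym by blast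
qed

section \<open>Even order: the cyclic square\<close>

definition cyclic_square :: "nat \<Rightarrow> nat \<Rightarrow> nat \<Rightarrow> nat" where
  "cyclic_square n i j = (i + j) mod n"

lemma cyclic_square_row_inj: "inj_on (cyclic_square n i) {..<n}"
proof (rule inj_onI)
  fix x y assume "x \<in> {..<n}" "y \<in> {..<n}" "cyclic_square n i x = cyclic_square n i y"
  then show "x = y"
    using add_mod_right_cancel[of x n y i] by (simp add: cyclic_square_def add.commute)
qed

lemma cyclic_square_latin:
  assumes "n > 0"
  shows "latin_square n (cyclic_square n)"
proof (rule latin_squareI)
  show "\<forall>i<n. \<forall>j<n. cyclic_square n i j < n"
    using assms by (simp add: cyclic_square_def)
  show "\<forall>i<n. inj_on (cyclic_square n i) {..<n}"
    using cyclic_square_row_inj by blast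
  show "\<forall>j<n. inj_on (\<lambda>i. cyclic_square n i j) {..<n}"
  proof (intro allI impI inj_onI)
    fix j x y assume "x \<in> {..<n}" "y \<in> {..<n}" "cyclic_square n x j = cyclic_square n y j"
    then show "x = y"
      using add_mod_right_cancel[of x n y j] by (simp add: cyclic_square_def)
  qed
qed

text \<open>For even n the cyclic square has no transversal at all: its shifts are the row
  indices, whose sum is not divisible by n.\<close>
lemma cyclic_square_no_transversal:
  assumes "even n" "n > 0"
  shows "\<not> transversal n (cyclic_square n) T"
proof
  assume tr: "transversal n (cyclic_square n) T"
  obtain f where "\<forall>i<n. \<forall>j. (i, j) \<in> T \<longleftrightarrow> j = f i"
    and "inj_on f {..<n}" "\<forall>i<n. f i < n"
    and "inj_on (\<lambda>i. cyclic_square n i (f i)) {..<n}" "\<forall>i<n. cyclic_square n i (f i) < n"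
    by (rule transversal_graph[OF cyclic_square_latin[OF assms(2)] tr])
  then have "[(\<Sum>i<n. i) = 0] (mod n)"
    using shift_sum_along_transversal[where s = "\<lambda>i j. i"] by (simp add: cyclic_square_def)
  then show False using dvd_sum_lessThan_iff assms by (simp add: cong_0_iff)
qed

section \<open>Odd order: a perturbed cyclic square\<close>

definition odd_shift :: "nat \<Rightarrow> nat \<Rightarrow> nat \<Rightarrow> nat" where
  "odd_shift n i j =
     (if 3 \<le> i \<or> j = 0 then i
      else if j = n - 1 then (if i = 0 then 2 else if i = 1 then 0 else 1)
      else if odd j then (if i = 0 then 1 else if i = 1 then 2 else 0)
      else (if i = 0 then 1 else if i = 1 then 0 else 2))"

definition odd_square :: "nat \<Rightarrow> nat \<Rightarrow> nat \<Rightarrow> nat" where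
  "odd_square n i j = (odd_shift n i j + j) mod n"

lemma odd_shift_col_inj:
  assumes "odd_shift n i j = odd_shift n i' j"
  shows "i = i'"
proof -
  have low: "odd_shift n k j \<le> 2" if "k < 3" for k
    using that by (simp add: odd_shift_def)
  have high: "odd_shift n k j = k" if "3 \<le> k" for k
    using that by (simp add: odd_shift_def)
  consider "3 \<le> i" | "3 \<le> i'" | "i < 3" "i' < 3" by linarith
  then show ?thesis
  proof cases
    case 1
    then show ?thesis using assms low[of i'] high by (cases "i' < 3") auto
  next
    case 2
    then show ?thesis using assms low[of i] high by (cases "i < 3") auto
  next
    case 3
    then have "i = 0 \<or> i = 1 \<or> i = 2" "i' = 0 \<or> i' = 1 \<or> i' = 2" by auto
    then show ?thesis using assms unfolding odd_shift_def by (elim disjE; simp; auto split: if_splits)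
  qed
qed

lemma odd_square_row0:
  assumes "5 \<le> n" "j < n"
  shows "odd_square n 0 j = (if j = 0 then 0 else if j = n - 1 then 1 else j + 1)"
  using assms by (simp add: odd_square_def odd_shift_def mod_less_double; presburger)

lemma odd_square_row1:
  assumes "odd n" "5 \<le> n" "j < n"
  shows "odd_square n 1 j = (if j = 0 then 1 else if j = n - 1 then n - 1
     else if odd j then (if j + 2 = n then 0 else j + 2) else j)"
  using assms by (simp add: odd_square_def odd_shift_def mod_less_double; presburger)

lemma odd_square_row2:
  assumes "odd n" "5 \<le> n" "j < n"
  shows "odd_square n 2 j =
           (if j = 0 then 2 else if j = n - 1 then 0 else if odd j then j else j + 2)"
  using assms by (simp add: odd_square_def odd_shift_def mod_less_double; presburger)

lemma odd_square_row0_inj: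
  assumes "5 \<le> n"
  shows "inj_on (odd_square n 0) {..<n}"
proof (rule inj_on_inverseI[where g = "\<lambda>v. if v = 0 then 0 else if v = 1 then n - 1 else v - 1"])
  fix j assume "j \<in> {..<n}"
  then show "(\<lambda>v. if v = 0 then 0 else if v = 1 then n - 1 else v - 1) (odd_square n 0 j) = j"
    using assms odd_square_row0[of n j] by auto
qed

lemma odd_square_row1_inj:
  assumes n: "odd n" "5 \<le> n"
  shows "inj_on (odd_square n 1) {..<n}"
proof (rule inj_on_inverseI[where g = "\<lambda>v. if v = 1 then 0 else if v = n - 1 then n - 1
    else if v = 0 then n - 2 else if odd v then v - 2 else v"])
  fix j assume "j \<in> {..<n}"
  then have j: "j < n" by simp
  consider "j = 0" | "j = n - 1" | "j \<noteq> 0" "j \<noteq> n - 1" "odd j" "j + 2 = n"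
    | "j \<noteq> 0" "j \<noteq> n - 1" "odd j" "j + 2 \<noteq> n" | "j \<noteq> 0" "j \<noteq> n - 1" "even j"
    by blast
  then show "(\<lambda>v. if v = 1 then 0 else if v = n - 1 then n - 1 else if v = 0 then n - 2
      else if odd v then v - 2 else v) (odd_square n 1 j) = j"
  proof cases
    case 4
    then have "j + 2 < n - 1" using n j by presburger
    then show ?thesis using 4 n j odd_square_row1[of n j] by simp
  next
    case 5
    then have "j \<noteq> 1" by presburger
    then show ?thesis using 5 n j odd_square_row1[of n j] by simp
  qed (use n j odd_square_row1[of n j] in simp_all)
qed

lemma odd_square_row2_inj:
  assumes n: "odd n" "5 \<le> n"
  shows "inj_on (odd_square n 2) {..<n}"
proof (rule inj_on_inverseI[where g = "\<lambda>v. if v = 2 then 0 else if v = 0 then n - 1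
    else if odd v then v else v - 2"])
  fix j assume "j \<in> {..<n}"
  then have j: "j < n" by simp
  consider "j = 0" | "j = n - 1" | "j \<noteq> 0" "j \<noteq> n - 1" "odd j"
    | "j \<noteq> 0" "j \<noteq> n - 1" "even j" by blast
  then show "(\<lambda>v. if v = 2 then 0 else if v = 0 then n - 1
      else if odd v then v else v - 2) (odd_square n 2 j) = j"
  proof cases
    case 3
    then have "j \<noteq> 2" by presburger
    then show ?thesis using 3 n j odd_square_row2[of n j] by simp
  qed (use n j odd_square_row2[of n j] in simp_all)
qed

lemma odd_square_latin:
  assumes n: "odd n" "5 \<le> n"
  shows "latin_square n (odd_square n)"
proof (rule latin_squareI)
  show "\<forall>i<n. \<forall>j<n. odd_square n i j < n" using n by (simp add: odd_square_def)
  show "\<forall>i<n. inj_on (odd_square n i) {..<n}"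
  proof (intro allI impI)
    fix i assume "i < n"
    show "inj_on (odd_square n i) {..<n}"
    proof (cases "i < 3")
      case True
      then have "i = 0 \<or> i = 1 \<or> i = 2" by auto
      then show ?thesis using odd_square_row0_inj odd_square_row1_inj odd_square_row2_inj n by auto
    next
      case False
      then have "odd_square n i = cyclic_square n i"
        by (simp add: fun_eq_iff odd_square_def odd_shift_def cyclic_square_def)
      then show ?thesis using cyclic_square_row_inj by simp
    qed
  qed
  show "\<forall>j<n. inj_on (\<lambda>i. odd_square n i j) {..<n}"
  proof (intro allI impI inj_onI)
    fix j x y assume "x \<in> {..<n}" "y \<in> {..<n}" "odd_square n x j = odd_square n y j"
    moreover have "odd_shift n i j < n" if "i < n" for i
      using that n by (simp add: odd_shift_def)
    ultimately have "odd_shift n x j = odd_shift n y j"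
      using add_mod_right_cancel[of "odd_shift n x j" n "odd_shift n y j" j]
      by (simp add: odd_square_def)
    then show "x = y" by (rule odd_shift_col_inj)
  qed
qed

text \<open>The cell (0,0) lies on no transversal.  Along a transversal f through it the shifts
  of rows 0, 1, 2 must add up to 3 modulo n.  Row 0 contributes 0 (as f 0 = 0), row 1
  contributes 0 or 2, and row 2 contributes 1 only in column n - 1; so f 2 = n - 1, where
  the symbol is 0 again.\<close>
lemma odd_square_cell_blocked:
  assumes n: "odd n" "5 \<le> n" and tr: "transversal n (odd_square n) T"
  shows "(0, 0) \<notin> T"
proof
  assume "(0, 0) \<in> T"
  obtain f where graph: "\<forall>i<n. \<forall>j. (i, j) \<in> T \<longleftrightarrow> j = f i"
    and f_perm: "inj_on f {..<n}" "\<forall>i<n. f i < n"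
    and symbol_perm: "inj_on (\<lambda>i. odd_square n i (f i)) {..<n}"
      "\<forall>i<n. odd_square n i (f i) < n"
    by (rule transversal_graph[OF odd_square_latin[OF n] tr])
  have f0: "f 0 = 0" using graph \<open>(0, 0) \<in> T\<close> n by auto
  have shift0: "odd_shift n 0 (f 0) = 0" using f0 by (simp add: odd_shift_def)
  have "f 1 \<noteq> 0" using inj_onD[OF f_perm(1), of 1 0] f0 n by auto
  then have shift1: "odd_shift n 1 (f 1) \<in> {0, 2}" by (simp add: odd_shift_def)
  have "f 2 \<noteq> 0" using inj_onD[OF f_perm(1), of 2 0] f0 n by auto
  then have shift2: "odd_shift n 2 (f 2) \<in> (if f 2 = n - 1 then {1} else {0, 2})"
    by (simp add: odd_shift_def)
  define X where "X = odd_shift n 0 (f 0) + odd_shift n 1 (f 1) + odd_shift n 2 (f 2)"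
  define R where "R = (\<Sum>i = 3..<n. i)"
  have "(\<Sum>i<n. odd_shift n i (f i)) = X + R"
    using sum_lessThan_split3[of n "\<lambda>i. odd_shift n i (f i)"] n
    unfolding X_def R_def by (simp add: odd_shift_def)
  then have "[X + R = 0] (mod n)"
    using shift_sum_along_transversal[where s = "odd_shift n" and L = "odd_square n",
        OF f_perm symbol_perm]
    by (simp add: odd_square_def)
  moreover have "[3 + R = 0] (mod n)"
    using dvd_sum_lessThan_iff[of n] sum_lessThan_split3[of n "\<lambda>i. i"] n
    unfolding R_def by (simp add: cong_0_iff numeral_3_eq_3)
  ultimately have "[X = 3] (mod n)"
    by (metis cong_add_rcancel_nat cong_sym cong_trans)
  moreover have "X < n"
    using shift0 shift1 shift2 n unfolding X_def by (auto split: if_splits)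
  ultimately have "X = 3" using n cong_less_modulus_unique_nat by simp
  then have "f 2 = n - 1"
    using shift0 shift1 shift2 unfolding X_def by (auto split: if_splits)
  then have "odd_square n 2 (f 2) = odd_square n 0 (f 0)"
    using f0 n odd_square_row2[of n "n - 1"] odd_square_row0[of n 0] by simp
  then show False using inj_onD[OF symbol_perm(1), of 2 0] n by simp
qed

theorem theorem1p4:
  fixes n :: nat
  assumes "n > 3"
  shows "\<exists>L. latin_square n L \<and>
           (\<exists>i<n. \<exists>j<n. \<forall>T. transversal n L T \<longrightarrow> (i, j) \<notin> T)"
proof (cases "even n")
  case True
  then have "latin_square n (cyclic_square n) \<and> (\<forall>T. \<not> transversal n (cyclic_square n) T)"
    using assms cyclic_square_latin cyclic_square_no_transversal by simp
  then show ?thesis using assms by (metis less_trans zero_less_numeral)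
next
  case False
  then have n: "odd n" "5 \<le> n" using assms by presburger+
  then have "latin_square n (odd_square n) \<and> (\<forall>T. transversal n (odd_square n) T \<longrightarrow> (0, 0) \<notin> T)"
    using odd_square_latin odd_square_cell_blocked by blast
  then show ?thesis using n by (metis less_le_trans zero_less_numeral)
qed

end
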